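(* The sequence $(c_n)_{n\ge1}$ satisfies $c_1=0$ and, for every $n\ge2$, $$c_n=c_{\lceil n/2\rceil}+c_{\lfloor n/2\rfloor}+\lceil n/2\rceil-\lfloor n/2\rfloor;$$ equivalently, $c_{2n}=2c_n$ and $c_{2n+1}=c_{n+1}+c_n+1$ for every $n\ge1$.
   Context: Bifurcating trees: rooted trees in which every internal node has exactly two children; $\mathcal{T}_n$ is the set of isomorphism classes of bifurcating trees with $n$ leaves. For a node $w$, $\kappa_T(w)$ is its number of descendant leaves. The Colless index is $\mathcal{C}(T)=\sum_{v}|\kappa_T(v_1)-\kappa_T(v_2)|$, summed over internal nodes $v$ with children $v_1,v_2$; $c_n=\min\{\mathcal{C}(T):T\in\mathcal{T}_n\}$. *)

theory Defs
  imports Main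
begin

text \<open>Isomorphism classes are handled by taking the
minimum over all trees; the Colless index is isomorphism-invariant.\<close>
datatype btree = Leaf | Node btree btree

fun kappa :: "btree \<Rightarrow> nat" where
  "kappa Leaf = 1"
| "kappa (Node l r) = kappa l + kappa r"

fun colless :: "btree \<Rightarrow> nat" where
  "colless Leaf = 0"
| "colless (Node l r) =
     nat \<bar>int (kappa l) - int (kappa r)\<bar> + colless l + colless r"

definition min_colless :: "nat \<Rightarrow> nat" where
  "min_colless n = Min (colless ` {t. kappa t = n})"

end

theory Submission
  imports Defs
begin

text \<open>The balanced tree on n leaves, splitting n into \<lceil>n/2\<rceil> and \<lfloor>n/2\<rfloor> at every node,
has Colless index given by the recursion of the theorem, so it suffices to show that
no tree does better. By induction on the tree this reduces to the inequality
c(a + b) \<le> c(a) + c(b) + |a - b| for the recursively defined c. For a, b \<ge> 2 it follows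
by halving both a and b and applying the induction hypothesis to the crosswise
sums \<lceil>a/2\<rceil> + \<lfloor>b/2\<rfloor> and \<lfloor>a/2\<rfloor> + \<lceil>b/2\<rceil>, which are the two halves of a + b; the
case of a single leaf is a separate, similar induction.\<close>

function balanced_colless :: "nat \<Rightarrow> nat" where
  "balanced_colless n = (if n \<le> 1 then 0
     else balanced_colless ((n + 1) div 2) + balanced_colless (n div 2)
          + ((n + 1) div 2 - n div 2))"
  by auto
termination by (relation "measure id") auto

declare balanced_colless.simps [simp del]

lemma balanced_colless_le_1 [simp]: "n \<le> 1 \<Longrightarrow> balanced_colless n = 0"
  by (subst balanced_colless.simps) simp

lemma balanced_colless_rec:
  "2 \<le> n \<Longrightarrow> balanced_colless n =
     balanced_colless ((n + 1) div 2) + balanced_colless (n div 2) + ((n + 1) div 2 - n div 2)"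
  by (subst balanced_colless.simps) simp

lemma balanced_colless_rec_sym:
  assumes "2 \<le> x + y" and "\<bar>int x - int y\<bar> \<le> 1"
  shows "int (balanced_colless (x + y)) =
           int (balanced_colless x) + int (balanced_colless y) + \<bar>int x - int y\<bar>"
proof (cases "y \<le> x")
  case True
  then have "(x + y + 1) div 2 = x" "(x + y) div 2 = y" using assms(2) by auto
  then show ?thesis using balanced_colless_rec[OF assms(1)] True by simp
next
  case False
  then have "(x + y + 1) div 2 = y" "(x + y) div 2 = x" using assms(2) by auto
  then show ?thesis using balanced_colless_rec[OF assms(1)] False by simp
qed

lemma balanced_colless_Suc_le:
  "1 \<le> b \<Longrightarrow> balanced_colless (Suc b) + 1 \<le> balanced_colless b + b"
proof (induction b rule: less_induct)
  case (less b)
  show ?case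
  proof (cases "b = 1")
    case True
    then show ?thesis by (simp add: balanced_colless_rec)
  next
    case False
    define b1 b2 where "b1 = (b + 1) div 2" and "b2 = b div 2"
    have halves: "b1 + b2 = b" "b2 \<le> b1" "b1 \<le> b2 + 1" "1 \<le> b2"
      using False less.prems unfolding b1_def b2_def by auto
    have "balanced_colless (Suc b) =
            balanced_colless (Suc b2) + balanced_colless b1 + (Suc b2 - b1)"
      using balanced_colless_rec[of "Suc b"] halves unfolding b1_def b2_def by simp
    moreover have "balanced_colless b = balanced_colless b1 + balanced_colless b2 + (b1 - b2)"
      using balanced_colless_rec[of b] halves unfolding b1_def b2_def by simp
    moreover have "balanced_colless (Suc b2) + 1 \<le> balanced_colless b2 + b2"
      using less.IH[of b2] halves by simp
    ultimately show ?thesis using halves by linarith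
  qed
qed

lemma crosswise_halves_abs_le:
  fixes a1 a2 b1 b2 :: int
  assumes "a2 \<le> a1" "a1 \<le> a2 + 1" "b2 \<le> b1" "b1 \<le> b2 + 1"
  shows "\<bar>a1 - b2\<bar> + \<bar>a2 - b1\<bar> + \<bar>(a1 + b2) - (a2 + b1)\<bar>
           \<le> \<bar>(a1 + a2) - (b1 + b2)\<bar> + \<bar>a1 - a2\<bar> + \<bar>b1 - b2\<bar>"
  using assms by (simp add: abs_if)

lemma balanced_colless_add_le:
  "int (balanced_colless (a + b)) \<le>
     int (balanced_colless a) + int (balanced_colless b) + \<bar>int a - int b\<bar>"
proof (induction "a + b" arbitrary: a b rule: less_induct)
  case less
  consider "a = 0 \<or> b = 0" | "a = 1 \<or> b = 1" | "2 \<le> a" "2 \<le> b"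
    by linarith
  then show ?case
  proof cases
    case 1
    then show ?thesis by auto
  next
    case 2
    then show ?thesis
      using balanced_colless_Suc_le[of a] balanced_colless_Suc_le[of b]
      by (cases "a = 0 \<or> b = 0") (auto simp: add.commute)
  next
    case 3
    define a1 a2 b1 b2 where "a1 = (a + 1) div 2" and "a2 = a div 2"
      and "b1 = (b + 1) div 2" and "b2 = b div 2"
    have halves: "a1 + a2 = a" "a2 \<le> a1" "a1 \<le> a2 + 1" "1 \<le> a2"
                 "b1 + b2 = b" "b2 \<le> b1" "b1 \<le> b2 + 1" "1 \<le> b2"
      using 3 unfolding a1_def a2_def b1_def b2_def by auto
    let ?c = "\<lambda>n. int (balanced_colless n)"
    have sum: "(a1 + b2) + (a2 + b1) = a + b" and "2 \<le> a + b"
      and "\<bar>int (a1 + b2) - int (a2 + b1)\<bar> \<le> 1"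
      using halves by linarith+
    then have "?c (a + b) = ?c (a1 + b2) + ?c (a2 + b1) + \<bar>int (a1 + b2) - int (a2 + b1)\<bar>"
      using balanced_colless_rec_sym[of "a1 + b2" "a2 + b1", unfolded sum] by simp
    moreover have "?c (a1 + b2) \<le> ?c a1 + ?c b2 + \<bar>int a1 - int b2\<bar>"
      using less.hyps[of a1 b2] halves by simp
    moreover have "?c (a2 + b1) \<le> ?c a2 + ?c b1 + \<bar>int a2 - int b1\<bar>"
      using less.hyps[of a2 b1] halves by simp
    moreover have "?c a = ?c a1 + ?c a2 + \<bar>int a1 - int a2\<bar>"
      using balanced_colless_rec_sym[of a1 a2] halves by simp
    moreover have "?c b = ?c b1 + ?c b2 + \<bar>int b1 - int b2\<bar>"
      using balanced_colless_rec_sym[of b1 b2] halves by simp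
    moreover have "\<bar>int a1 - int b2\<bar> + \<bar>int a2 - int b1\<bar> + \<bar>int (a1 + b2) - int (a2 + b1)\<bar>
        \<le> \<bar>int a - int b\<bar> + \<bar>int a1 - int a2\<bar> + \<bar>int b1 - int b2\<bar>"
      using crosswise_halves_abs_le[of "int a2" "int a1" "int b2" "int b1"] halves by simp
    ultimately show ?thesis by linarith
  qed
qed

lemma kappa_ge_1: "1 \<le> kappa t"
  by (induction t) auto

lemma balanced_colless_le_colless: "balanced_colless (kappa t) \<le> colless t"
proof (induction t)
  case Leaf
  then show ?case by simp
next
  case (Node l r)
  then show ?case
    using balanced_colless_add_le[of "kappa l" "kappa r"] by simp
qed

function balanced_tree :: "nat \<Rightarrow> btree" where
  "balanced_tree n = (if n \<le> 1 then Leaf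
     else Node (balanced_tree ((n + 1) div 2)) (balanced_tree (n div 2)))"
  by auto
termination by (relation "measure id") auto

declare balanced_tree.simps [simp del]

lemma kappa_colless_balanced_tree:
  "1 \<le> n \<Longrightarrow> kappa (balanced_tree n) = n \<and> colless (balanced_tree n) = balanced_colless n"
proof (induction n rule: less_induct)
  case (less n)
  show ?case
  proof (cases "n = 1")
    case True
    then show ?thesis by (simp add: balanced_tree.simps)
  next
    case False
    then have "2 \<le> n" using less.prems by simp
    define h1 h2 where "h1 = (n + 1) div 2" and "h2 = n div 2"
    have halves: "h1 + h2 = n" "h2 \<le> h1" "h1 < n" "h2 < n" "1 \<le> h2"
      using \<open>2 \<le> n\<close> unfolding h1_def h2_def by auto
    have "balanced_tree n = Node (balanced_tree h1) (balanced_tree h2)"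
      using \<open>2 \<le> n\<close> unfolding h1_def h2_def by (subst balanced_tree.simps) simp
    moreover have "balanced_colless n = balanced_colless h1 + balanced_colless h2 + (h1 - h2)"
      using balanced_colless_rec[OF \<open>2 \<le> n\<close>] unfolding h1_def h2_def .
    moreover have "nat \<bar>int h1 - int h2\<bar> = h1 - h2"
      using halves by simp
    ultimately show ?thesis
      using less.IH[of h1] less.IH[of h2] halves by simp
  qed
qed

lemma finite_kappa_le: "finite {t. kappa t \<le> n}"
proof (induction n)
  case 0
  have "{t. kappa t \<le> 0} = {}" using kappa_ge_1 not_one_le_zero le_trans by blast
  then show ?case by (simp only: finite.emptyI)
next
  case (Suc n)
  let ?S = "{t. kappa t \<le> n}"
  have "{t. kappa t \<le> Suc n} \<subseteq> insert Leaf (case_prod Node ` (?S \<times> ?S))"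
  proof
    fix t assume t: "t \<in> {t. kappa t \<le> Suc n}"
    show "t \<in> insert Leaf (case_prod Node ` (?S \<times> ?S))"
    proof (cases t)
      case (Node l r)
      then have "(l, r) \<in> ?S \<times> ?S" using t kappa_ge_1[of l] kappa_ge_1[of r] by simp
      then show ?thesis using Node by force
    qed simp
  qed
  moreover have "finite (insert Leaf (case_prod Node ` (?S \<times> ?S)))"
    using Suc by simp
  ultimately show ?case by (rule finite_subset)
qed

lemma min_colless_eq_balanced_colless: "1 \<le> n \<Longrightarrow> min_colless n = balanced_colless n"
  unfolding min_colless_def
proof (rule Min_eqI)
  show "finite (colless ` {t. kappa t = n})"
    by (rule finite_imageI, rule finite_subset[OF _ finite_kappa_le[of n]]) auto
  show "balanced_colless n \<le> c" if "c \<in> colless ` {t. kappa t = n}" for c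
    using that balanced_colless_le_colless by auto
  show "balanced_colless n \<in> colless ` {t. kappa t = n}" if "1 \<le> n"
    using kappa_colless_balanced_tree[OF that] by force
qed

theorem corollary3:
  shows "min_colless 1 = 0
    \<and> (\<forall>n\<ge>2. min_colless n =
          min_colless ((n + 1) div 2) + min_colless (n div 2)
          + ((n + 1) div 2 - n div 2))
    \<and> (\<forall>n\<ge>1. min_colless (2 * n) = 2 * min_colless n
          \<and> min_colless (2 * n + 1) = min_colless (n + 1) + min_colless n + 1)"
proof (intro conjI allI impI)
  show "min_colless 1 = 0"
    by (simp add: min_colless_eq_balanced_colless)
next
  fix n :: nat assume "2 \<le> n"
  then show "min_colless n =
      min_colless ((n + 1) div 2) + min_colless (n div 2) + ((n + 1) div 2 - n div 2)"
    by (simp add: min_colless_eq_balanced_colless balanced_colless_rec)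
next
  fix n :: nat assume "1 \<le> n"
  then show "min_colless (2 * n) = 2 * min_colless n"
    and "min_colless (2 * n + 1) = min_colless (n + 1) + min_colless n + 1"
    by (simp_all add: min_colless_eq_balanced_colless balanced_colless_rec)
qed

end
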